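(* Let $L$ be a list of sets, $F_t$, $F_c$, $F'$ families, $w$ a function from elements to $\mathbb{N}$ and $X$ a set. Suppose (i) $\mathrm{ssn\_aux}(L,F_t,F_c,w,X)=\mathrm{false}$; (ii) $\mathrm{ss}(A,w,X)<0$ for every entry $A$ of $L$; (iii) every $A\in F'\setminus F_t$ with $\mathrm{ss}(A,w,X)<0$ is an entry of $L$; (iv) $F_t\subseteq F'$; (v) $F'$ is union closed for $F_c$. Then $\mathrm{fs}(F',w,X)\ge 0$.
   Context: All sets and families are finite. A family $F$ is union closed if $A\cup B\in F$ for all $A,B\in F$; it is union closed for $F_c$ if it is union closed and $A\cup B\in F$ for all $A\in F$, $B\in F_c$. $\mathrm{sw}(w,A)=\sum_{a\in A}w(a)$; $\mathrm{ss}(A,w,X)=2\,\mathrm{sw}(w,A)-\mathrm{sw}(w,X)\in\mathbb{Z}$; $\mathrm{fs}(F,w,X)=\sum_{A\in F}\mathrm{ss}(A,w,X)$. For a family $G$ and a set $h$, $\mathrm{ica}_{G}(h,F) = F\cup\{h\}\cup\{h\cup B: B\in F\}\cup\{h\cup B: B\in G\}$. The function $\mathrm{ssn\_aux}(L,F_t,G,w,X)$ (boolean valued) is defined by recursion on the list $L$: $\mathrm{ssn\_aux}([\,],F_t,G,w,X) = (\mathrm{fs}(F_t,w,X)<0)$; and for $L = h\#t$: if $\mathrm{fs}(F_t,w,X)+\sum_{A \in h\#t}\mathrm{ss}(A,w,X)\ge 0$ (sum over list entries) then false; else if $\mathrm{ssn\_aux}(t,F_t,G,w,X)$ then true; else if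 $h\in F_t$ then false; else $\mathrm{ssn\_aux}(t,\mathrm{ica}_G(h,F_t),G,w,X)$. *)

theory Defs
  imports Main
begin

definition union_closed :: "'a set set \<Rightarrow> bool" where
  "union_closed F \<longleftrightarrow> (\<forall>A\<in>F. \<forall>B\<in>F. A \<union> B \<in> F)"

definition union_closed_for :: "'a set set \<Rightarrow> 'a set set \<Rightarrow> bool" where
  "union_closed_for F Fc \<longleftrightarrow> union_closed F \<and> (\<forall>A\<in>F. \<forall>B\<in>Fc. A \<union> B \<in> F)"

definition sw :: "('a \<Rightarrow> nat) \<Rightarrow> 'a set \<Rightarrow> nat" where
  "sw w A = (\<Sum>a\<in>A. w a)"

definition ss :: "'a set \<Rightarrow> ('a \<Rightarrow> nat) \<Rightarrow> 'a set \<Rightarrow> int" where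
  "ss A w X = 2 * int (sw w A) - int (sw w X)"

definition fs :: "'a set set \<Rightarrow> ('a \<Rightarrow> nat) \<Rightarrow> 'a set \<Rightarrow> int" where
  "fs F w X = (\<Sum>A\<in>F. ss A w X)"

definition ica :: "'a set set \<Rightarrow> 'a set \<Rightarrow> 'a set set \<Rightarrow> 'a set set" where
  "ica G h F = F \<union> {h} \<union> {h \<union> B | B. B \<in> F} \<union> {h \<union> B | B. B \<in> G}"

fun ssn_aux :: "'a set list \<Rightarrow> 'a set set \<Rightarrow> 'a set set \<Rightarrow> ('a \<Rightarrow> nat) \<Rightarrow> 'a set \<Rightarrow> bool" where
  "ssn_aux [] Ft G w X = (fs Ft w X < 0)"
| "ssn_aux (h # t) Ft G w X =
     (if fs Ft w X + (\<Sum>A\<leftarrow>h # t. ss A w X) \<ge> 0 then False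
      else if ssn_aux t Ft G w X then True
      else if h \<in> Ft then False
      else ssn_aux t (ica G h Ft) G w X)"

end

theory Submission
  imports Defs
begin

text \<open>Since the entries of \<open>L\<close> cover the negative members of \<open>F' - Ft\<close> and are themselves
  negative, \<open>fs F' \<ge> fs Ft + \<Sum>L\<close>. The proof is an induction on \<open>L\<close> along the recursion of
  \<open>ssn_aux\<close>: either this lower bound is already nonnegative, or the head \<open>h\<close> is dropped, which
  is harmless unless \<open>h \<in> F' - Ft\<close>, and in that case \<open>Ft\<close> grows to \<open>ica Fc h Ft\<close>, which contains
  \<open>h\<close> and, by union closedness, still lies inside \<open>F'\<close>.\<close>

lemma sum_list_le_sum_set_nonpos:
  fixes f :: "'b \<Rightarrow> 'c::ordered_comm_monoid_add"
  assumes "\<forall>x\<in>set xs. f x \<le> 0"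
  shows "sum_list (map f xs) \<le> sum f (set xs)"
  using assms
proof (induction xs)
  case Nil
  then show ?case by simp
next
  case (Cons x xs)
  then have IH: "sum_list (map f xs) \<le> sum f (set xs)" and "f x \<le> 0" by simp_all
  show ?case
  proof (cases "x \<in> set xs")
    case True
    with add_mono[OF \<open>f x \<le> 0\<close> IH] show ?thesis by (simp add: insert_absorb)
  next
    case False
    with IH show ?thesis by (simp add: add_left_mono)
  qed
qed

lemma sum_ge_sum_subset_plus_sum_list:
  fixes f :: "'b \<Rightarrow> 'c::linordered_ab_group_add"
  assumes "finite F" and "E \<subseteq> F"
    and neg: "\<forall>A\<in>set L. f A \<le> 0"
    and covered: "\<forall>A\<in>F - E. f A < 0 \<longrightarrow> A \<in> set L"
  shows "sum f E + sum_list (map f L) \<le> sum f F"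
proof -
  define S where "S = {A \<in> F - E. f A < 0}"
  have "S \<subseteq> set L" using covered by (auto simp: S_def)
  have "sum_list (map f L) \<le> sum f (set L)"
    using neg by (rule sum_list_le_sum_set_nonpos)
  also have "\<dots> = sum f S + sum f (set L - S)"
    using sum.subset_diff[OF \<open>S \<subseteq> set L\<close>] by (simp add: add.commute)
  also have "\<dots> \<le> sum f S"
    using add_left_mono[OF sum_nonpos[of "set L - S" f], of "sum f S"] neg by auto
  also have "\<dots> \<le> sum f (F - E)"
    using \<open>finite F\<close> by (intro sum_mono2) (auto simp: S_def)
  finally have "sum_list (map f L) \<le> sum f (F - E)" .
  then show ?thesis
    using sum.subset_diff[OF \<open>E \<subseteq> F\<close> \<open>finite F\<close>] by (metis add.commute add_left_mono)
qed

lemma ica_subset: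
  assumes "union_closed_for F G" and "E \<subseteq> F" and "h \<in> F"
  shows "ica G h E \<subseteq> F"
  using assms unfolding ica_def union_closed_for_def union_closed_def by blast

lemma fs_nonneg_if_not_ssn_aux:
  assumes "finite F'"
    and "\<not> ssn_aux L Ft Fc w X"
    and "\<forall>A\<in>set L. ss A w X < 0"
    and "\<forall>A\<in>F' - Ft. ss A w X < 0 \<longrightarrow> A \<in> set L"
    and "Ft \<subseteq> F'"
    and "union_closed_for F' Fc"
  shows "fs F' w X \<ge> 0"
proof -
  have fs_lower_bound: "fs Ft w X + (\<Sum>A\<leftarrow>L. ss A w X) \<le> fs F' w X"
    if "\<forall>A\<in>set L. ss A w X < 0" and "\<forall>A\<in>F' - Ft. ss A w X < 0 \<longrightarrow> A \<in> set L"
      and "Ft \<subseteq> F'" for L Ft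
    unfolding fs_def using \<open>finite F'\<close> that
    by (intro sum_ge_sum_subset_plus_sum_list) auto
  show ?thesis
    using assms(2-5)
  proof (induction L arbitrary: Ft)
    case Nil
    with fs_lower_bound[of "[]" Ft] show ?case by simp
  next
    case (Cons h t)
    show ?case
    proof (cases "fs Ft w X + (\<Sum>A\<leftarrow>h # t. ss A w X) \<ge> 0")
      case True
      with fs_lower_bound[of "h # t" Ft] Cons.prems(2-4) show ?thesis by simp
    next
      case False
      with Cons.prems(1) have not_t: "\<not> ssn_aux t Ft Fc w X"
        and not_ica: "h \<notin> Ft \<Longrightarrow> \<not> ssn_aux t (ica Fc h Ft) Fc w X"
        by (auto split: if_splits)
      show ?thesis
      proof (cases "h \<in> F' - Ft")
        case True
        have "ica Fc h Ft \<subseteq> F'"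
          using assms(6) Cons.prems(4) True by (intro ica_subset) auto
        moreover have "\<forall>A\<in>F' - ica Fc h Ft. ss A w X < 0 \<longrightarrow> A \<in> set t"
          using Cons.prems(3) unfolding ica_def by auto
        ultimately show ?thesis
          using Cons.IH not_ica True Cons.prems(2) by simp
      next
        case False
        then have "\<forall>A\<in>F' - Ft. ss A w X < 0 \<longrightarrow> A \<in> set t"
          using Cons.prems(3) by auto
        then show ?thesis
          using Cons.IH not_t Cons.prems(2,4) by simp
      qed
    qed
  qed
qed

theorem lemma5:
  fixes L :: "'a set list" and Ft Fc F' :: "'a set set"
    and w :: "'a \<Rightarrow> nat" and X :: "'a set"
  assumes "finite F'" and "\<forall>A\<in>F'. finite A" and "finite X"
    and "finite Fc" and "\<forall>A\<in>Fc. finite A" and "\<forall>A\<in>set L. finite A"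
    and "\<not> ssn_aux L Ft Fc w X"
    and "\<forall>A\<in>set L. ss A w X < 0"
    and "\<forall>A\<in>F' - Ft. ss A w X < 0 \<longrightarrow> A \<in> set L"
    and "Ft \<subseteq> F'"
    and "union_closed_for F' Fc"
  shows "fs F' w X \<ge> 0"
  using fs_nonneg_if_not_ssn_aux[OF assms(1,7-11)] .

end
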